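(* Let $G$ be a group with unit $e$, $X$ a set and $(X_g,\alpha_g)_{g\in G}$ a lax partial action of $G$ on $X$. The following are equivalent: (i) $(X_g,\alpha_g)$ is a partial action; (ii) the inclusion $\{(h,g,x)\in G\times G\times X: x\in X_{g^{-1}},\ \alpha_g(x)\in X_{h^{-1}}\}\subseteq \{(h,g,x)\in G\times G\times X : x\in X_{g^{-1}}\cap X_{(hg)^{-1}}\}$ is a bijection (i.e. the two sets are equal); (iii) for each $g\in G$ one has $\alpha_g(X_{g^{-1}})\subseteq X_g$.
   Context: A partial action datum of $G$ on $X$ is a family of subsets $X_g\subseteq X$ ($g\in G$) with maps $\alpha_g:X_{g^{-1}}\to X$. It is a partial action if (PA1) $X_e=X$ and $\alpha_e=\mathrm{id}_X$; (PA2) $\alpha_g(X_{g^{-1}}\cap X_h)\subseteq X_g\cap X_{gh}$ for all $g,h$; (PA3) $\alpha_h\circ\alpha_g=\alpha_{hg}$ on $X_{g^{-1}}\cap X_{(hg)^{-1}}$. It is a lax partial action if (LPA1) $X_e=X$ and $\alpha_e=\mathrm{id}_X$; (LPA2) $X_{g^{-1}}\cap\alpha_g^{-1}(X_{h^{-1}})\subseteq X_{(hg)^{-1}}$; (LPA3) $\alpha_h\circ\alpha_g=\alpha_{hg}$ on $X_{g^{-1}}\cap\alpha_g^{-1}(X_{h^{-1}})$. (By (LPA2) the first set in (ii) is contained in the second.) *)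

theory Defs
  imports "HOL-Algebra.Group"
begin

text \<open>Values of alpha g outside D (inv g) and of D, alpha outside carrier G are irrelevant.\<close>

definition partial_action_datum ::
  "('g, 'm) monoid_scheme \<Rightarrow> 'x set \<Rightarrow> ('g \<Rightarrow> 'x set) \<Rightarrow> ('g \<Rightarrow> 'x \<Rightarrow> 'x) \<Rightarrow> bool" where
  "partial_action_datum G X D \<alpha> \<longleftrightarrow>
     (\<forall>g\<in>carrier G. D g \<subseteq> X \<and> \<alpha> g ` D (inv\<^bsub>G\<^esub> g) \<subseteq> X)"

definition partial_action ::
  "('g, 'm) monoid_scheme \<Rightarrow> 'x set \<Rightarrow> ('g \<Rightarrow> 'x set) \<Rightarrow> ('g \<Rightarrow> 'x \<Rightarrow> 'x) \<Rightarrow> bool" where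
  "partial_action G X D \<alpha> \<longleftrightarrow>
     partial_action_datum G X D \<alpha> \<and>
     \<comment> \<open>PA1\<close>
     D \<one>\<^bsub>G\<^esub> = X \<and> (\<forall>x\<in>X. \<alpha> \<one>\<^bsub>G\<^esub> x = x) \<and>
     \<comment> \<open>PA2\<close>
     (\<forall>g\<in>carrier G. \<forall>h\<in>carrier G.
        \<alpha> g ` (D (inv\<^bsub>G\<^esub> g) \<inter> D h) \<subseteq> D g \<inter> D (g \<otimes>\<^bsub>G\<^esub> h)) \<and>
     \<comment> \<open>PA3\<close>
     (\<forall>g\<in>carrier G. \<forall>h\<in>carrier G.
        \<forall>x \<in> D (inv\<^bsub>G\<^esub> g) \<inter> D (inv\<^bsub>G\<^esub> (h \<otimes>\<^bsub>G\<^esub> g)).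
          \<alpha> h (\<alpha> g x) = \<alpha> (h \<otimes>\<^bsub>G\<^esub> g) x)"

definition lax_partial_action ::
  "('g, 'm) monoid_scheme \<Rightarrow> 'x set \<Rightarrow> ('g \<Rightarrow> 'x set) \<Rightarrow> ('g \<Rightarrow> 'x \<Rightarrow> 'x) \<Rightarrow> bool" where
  "lax_partial_action G X D \<alpha> \<longleftrightarrow>
     partial_action_datum G X D \<alpha> \<and>
     \<comment> \<open>LPA1\<close>
     D \<one>\<^bsub>G\<^esub> = X \<and> (\<forall>x\<in>X. \<alpha> \<one>\<^bsub>G\<^esub> x = x) \<and>
     \<comment> \<open>LPA2: X_{g^-1} \<inter> alpha_g^-1(X_{h^-1}) \<subseteq> X_{(hg)^-1}\<close>
     (\<forall>g\<in>carrier G. \<forall>h\<in>carrier G.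
        {x \<in> D (inv\<^bsub>G\<^esub> g). \<alpha> g x \<in> D (inv\<^bsub>G\<^esub> h)} \<subseteq> D (inv\<^bsub>G\<^esub> (h \<otimes>\<^bsub>G\<^esub> g))) \<and>
     \<comment> \<open>LPA3\<close>
     (\<forall>g\<in>carrier G. \<forall>h\<in>carrier G.
        \<forall>x \<in> {x \<in> D (inv\<^bsub>G\<^esub> g). \<alpha> g x \<in> D (inv\<^bsub>G\<^esub> h)}.
          \<alpha> h (\<alpha> g x) = \<alpha> (h \<otimes>\<^bsub>G\<^esub> g) x)"

end

theory Submission
  imports Defs
begin

text \<open>A lax partial action becomes a partial action exactly when the domain condition
  LPA2 can be reversed: x \<in> X_{g^-1} \<inter> X_{(hg)^-1} should force \<alpha>_g x \<in> X_{h^-1}.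
  Given this, taking h = g^-1 and h = (gk)^-1 yields PA2, and LPA3 becomes PA3.
  Condition (iii) suffices for the reversal: it makes \<alpha>_{g^-1} undo \<alpha>_g, so LPA2 for
  the pair (g^-1, hg) applied to \<alpha>_g x gives \<alpha>_g x \<in> X_{(hg g^-1)^-1} = X_{h^-1}.
  Conversely PA2 with h = e gives (iii).\<close>

lemma partial_action_image_subset:
  fixes G (structure)
  assumes "group G" and "partial_action G X D \<alpha>" and "g \<in> carrier G"
  shows "\<alpha> g ` D (inv\<^bsub>G\<^esub> g) \<subseteq> D g"
proof -
  interpret group G by fact
  have "D (inv g) \<subseteq> D \<one>"
    using assms(2,3) unfolding partial_action_def partial_action_datum_def by auto
  moreover have "\<alpha> g ` (D (inv g) \<inter> D \<one>) \<subseteq> D g \<inter> D (g \<otimes> \<one>)"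
    using assms(2,3) unfolding partial_action_def by blast
  ultimately show ?thesis by (simp add: Int_absorb2)
qed

locale lax_partial_group_action = group G for G (structure) +
  fixes X :: "'x set" and D :: "'g \<Rightarrow> 'x set" and \<alpha> :: "'g \<Rightarrow> 'x \<Rightarrow> 'x"
  assumes lax: "lax_partial_action G X D \<alpha>"
begin

lemma datum: "partial_action_datum G X D \<alpha>"
  and dom_one: "D \<one> = X"
  and act_one: "x \<in> X \<Longrightarrow> \<alpha> \<one> x = x"
  using lax unfolding lax_partial_action_def by blast+

lemma dom_subset: "g \<in> carrier G \<Longrightarrow> D g \<subseteq> X"
  using datum unfolding partial_action_datum_def by blast

lemma dom_mult:
  "\<lbrakk>g \<in> carrier G; h \<in> carrier G; x \<in> D (inv g); \<alpha> g x \<in> D (inv h)\<rbrakk>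
    \<Longrightarrow> x \<in> D (inv (h \<otimes> g))"
  using lax unfolding lax_partial_action_def by blast

lemma act_mult:
  "\<lbrakk>g \<in> carrier G; h \<in> carrier G; x \<in> D (inv g); \<alpha> g x \<in> D (inv h)\<rbrakk>
    \<Longrightarrow> \<alpha> h (\<alpha> g x) = \<alpha> (h \<otimes> g) x"
  using lax unfolding lax_partial_action_def by blast

lemma act_inv_act:
  assumes g: "g \<in> carrier G" and x: "x \<in> D (inv g)" and gx: "\<alpha> g x \<in> D g"
  shows "\<alpha> (inv g) (\<alpha> g x) = x"
proof -
  have "\<alpha> (inv g) (\<alpha> g x) = \<alpha> (inv g \<otimes> g) x"
    using act_mult[OF g inv_closed[OF g] x] gx g by simp
  also have "\<dots> = x"
    using g x dom_subset[of "inv g"] act_one by auto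
  finally show ?thesis .
qed

lemma act_in_dom_if_image_subset:
  assumes image: "\<forall>g\<in>carrier G. \<alpha> g ` D (inv g) \<subseteq> D g"
    and h: "h \<in> carrier G" and g: "g \<in> carrier G"
    and x: "x \<in> D (inv g)" and hgx: "x \<in> D (inv (h \<otimes> g))"
  shows "\<alpha> g x \<in> D (inv h)"
proof -
  have gx: "\<alpha> g x \<in> D (inv (inv g))"
    using image g x by auto
  have "\<alpha> (inv g) (\<alpha> g x) \<in> D (inv (h \<otimes> g))"
    using act_inv_act[OF g x] gx hgx g by simp
  then have "\<alpha> g x \<in> D (inv (h \<otimes> g \<otimes> inv g))"
    using dom_mult[OF inv_closed[OF g] m_closed[OF h g] gx] by blast
  then show ?thesis
    using h g by (simp add: m_assoc)
qed

lemma partial_action_if_dom_reverse: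
  assumes reverse: "\<And>h g x. \<lbrakk>h \<in> carrier G; g \<in> carrier G; x \<in> D (inv g);
      x \<in> D (inv (h \<otimes> g))\<rbrakk> \<Longrightarrow> \<alpha> g x \<in> D (inv h)"
  shows "partial_action G X D \<alpha>"
proof -
  have PA2: "\<alpha> g ` (D (inv g) \<inter> D k) \<subseteq> D g \<inter> D (g \<otimes> k)"
    if g: "g \<in> carrier G" and k: "k \<in> carrier G" for g k
  proof (rule image_subsetI, elim IntE)
    fix x assume x: "x \<in> D (inv g)" and xk: "x \<in> D k"
    have "x \<in> D (inv (inv g \<otimes> g))"
      using g x dom_subset[of "inv g"] dom_one by auto
    then have "\<alpha> g x \<in> D g"
      using reverse[OF inv_closed[OF g] g x] g by simp
    moreover have "inv (inv (g \<otimes> k) \<otimes> g) = k"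
      using g k by (simp add: inv_mult_group m_assoc[symmetric])
    then have "\<alpha> g x \<in> D (g \<otimes> k)"
      using reverse[OF inv_closed[OF m_closed[OF g k]] g x] xk g k by simp
    ultimately show "\<alpha> g x \<in> D g \<inter> D (g \<otimes> k)" by blast
  qed
  have PA3: "\<alpha> h (\<alpha> g x) = \<alpha> (h \<otimes> g) x"
    if "g \<in> carrier G" "h \<in> carrier G" "x \<in> D (inv g) \<inter> D (inv (h \<otimes> g))" for g h x
    using that reverse act_mult by blast
  show ?thesis
    unfolding partial_action_def
    by (intro conjI ballI datum dom_one act_one PA2 PA3) assumption+
qed

lemma triples_eq_iff_dom_reverse:
  "{(h, g, x). h \<in> carrier G \<and> g \<in> carrier G \<and> x \<in> X \<and>
      x \<in> D (inv g) \<and> \<alpha> g x \<in> D (inv h)}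
   = {(h, g, x). h \<in> carrier G \<and> g \<in> carrier G \<and> x \<in> X \<and>
      x \<in> D (inv g) \<inter> D (inv (h \<otimes> g))}
   \<longleftrightarrow> (\<forall>h\<in>carrier G. \<forall>g\<in>carrier G. \<forall>x \<in> D (inv g) \<inter> D (inv (h \<otimes> g)).
      \<alpha> g x \<in> D (inv h))"
  (is "?A = ?B \<longleftrightarrow> ?reverse")
proof
  assume eq: "?A = ?B"
  show ?reverse
  proof (intro ballI, elim IntE)
    fix h g x assume "h \<in> carrier G" "g \<in> carrier G" "x \<in> D (inv g)" "x \<in> D (inv (h \<otimes> g))"
    then have "(h, g, x) \<in> ?B"
      using dom_subset[of "inv g"] by auto
    then have "(h, g, x) \<in> ?A"
      using eq by simp
    then show "\<alpha> g x \<in> D (inv h)"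
      by simp
  qed
next
  assume reverse: ?reverse
  have "x \<in> D (inv (h \<otimes> g)) \<longleftrightarrow> \<alpha> g x \<in> D (inv h)"
    if "h \<in> carrier G" "g \<in> carrier G" "x \<in> D (inv g)" for h g x
    using that reverse dom_mult by blast
  then show "?A = ?B"
    by (auto intro!: Collect_cong)
qed

end

theorem mainTheorem3:
  fixes G :: "('g, 'm) monoid_scheme" and X :: "'x set"
    and D :: "'g \<Rightarrow> 'x set" and \<alpha> :: "'g \<Rightarrow> 'x \<Rightarrow> 'x"
  assumes "group G"
    and "lax_partial_action G X D \<alpha>"
  shows "(partial_action G X D \<alpha> \<longleftrightarrow>
           {(h, g, x). h \<in> carrier G \<and> g \<in> carrier G \<and> x \<in> X \<and>
              x \<in> D (inv\<^bsub>G\<^esub> g) \<and> \<alpha> g x \<in> D (inv\<^bsub>G\<^esub> h)}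
           = {(h, g, x). h \<in> carrier G \<and> g \<in> carrier G \<and> x \<in> X \<and>
              x \<in> D (inv\<^bsub>G\<^esub> g) \<inter> D (inv\<^bsub>G\<^esub> (h \<otimes>\<^bsub>G\<^esub> g))})
       \<and> (partial_action G X D \<alpha> \<longleftrightarrow>
           (\<forall>g\<in>carrier G. \<alpha> g ` D (inv\<^bsub>G\<^esub> g) \<subseteq> D g))"
proof -
  interpret lax_partial_group_action G X D \<alpha>
    using assms by (intro lax_partial_group_action.intro lax_partial_group_action_axioms.intro)
  let ?reverse = "\<forall>h\<in>carrier G. \<forall>g\<in>carrier G. \<forall>x \<in> D (inv\<^bsub>G\<^esub> g) \<inter> D (inv\<^bsub>G\<^esub> (h \<otimes>\<^bsub>G\<^esub> g)).
      \<alpha> g x \<in> D (inv\<^bsub>G\<^esub> h)"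
  let ?image = "\<forall>g\<in>carrier G. \<alpha> g ` D (inv\<^bsub>G\<^esub> g) \<subseteq> D g"
  have "?image" if "partial_action G X D \<alpha>"
    using partial_action_image_subset[OF assms(1) that] by blast
  moreover have "?reverse" if ?image
    using act_in_dom_if_image_subset[OF that] by blast
  moreover have "partial_action G X D \<alpha>" if ?reverse
    using partial_action_if_dom_reverse that by blast
  ultimately show ?thesis
    unfolding triples_eq_iff_dom_reverse by blast
qed

end
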